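(* Let $P:[0,\infty)\to[-\tfrac14,\infty)$ be defined by $P(r)=r-\frac{1}{4(r+1)}$. For any $a_0\ge0$, define $a_{n+1}=P(a_n)$ recursively (as long as $a_n\ge0$). Then there exists an integer $N_0$ such that $0\le a_{N_0}<1$ and $-\tfrac14\le a_{N_0+1}<0$. Conversely, for any $a\in[0,1)$ and any $b>a$, there exists a sequence $a_0,\dots,a_{N_0}$ defined by the recursion $a_{n+1}=P(a_n)$ such that $a_0>b$ and $a_{N_0}=a$. *)

theory Defs
  imports Complex_Main
begin

text \<open>The map P(r) = r - 1/(4(r+1)), intended on [0,\<infinity>); we define it on all reals
  and guard the domain by requiring all iterates used to be nonnegative.\<close>
definition P :: "real \<Rightarrow> real" where
  "P r = r - 1 / (4 * (r + 1))"

end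

theory Submission
  imports Defs
begin

text \<open>On \<open>[0,\<infinity>)\<close> the map \<open>P\<close> moves every point down by \<open>1/(4(r+1))\<close>. Along a forward
  orbit that stays nonnegative the points are bounded by \<open>a\<^sub>0\<close>, so every step is at least
  \<open>1/(4(a\<^sub>0+1))\<close> and the orbit must leave \<open>[0,\<infinity>)\<close>; it leaves it from \<open>[0,1)\<close> into
  \<open>[-1/4,0)\<close>, since \<open>P\<close> is \<open>\<ge> 0\<close> on \<open>[1,\<infinity>)\<close> and \<open>\<ge> -1/4\<close> on \<open>[0,\<infinity>)\<close>. Conversely \<open>P\<close> maps
  \<open>[0,\<infinity>)\<close> onto a set containing \<open>[0,\<infinity>)\<close>, so every \<open>a \<ge> 0\<close> has a nonnegative backward orbit;
  by the same step-size argument it is unbounded and hence eventually exceeds any \<open>b\<close>.\<close>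

lemma P_le_self: "0 \<le> r \<Longrightarrow> P r \<le> r"
  by (simp add: P_def)

lemma P_ge_sub_quarter: "0 \<le> r \<Longrightarrow> r - 1/4 \<le> P r"
proof -
  assume "0 \<le> r"
  then have "1 / (4 * (r + 1)) \<le> 1/4" by (simp add: field_simps)
  then show ?thesis unfolding P_def by linarith
qed

lemma P_step_ge:
  assumes "0 \<le> r" "r \<le> A"
  shows "P r + 1 / (4 * (A + 1)) \<le> r"
proof -
  have "1 / (4 * (A + 1)) \<le> 1 / (4 * (r + 1))"
    using assms by (intro divide_left_mono) auto
  then show ?thesis unfolding P_def by linarith
qed

lemma unbounded_if_increments_ge:
  fixes s :: "nat \<Rightarrow> real"
  assumes "0 < c" and step: "\<And>n. s n + c \<le> s (Suc n)"
  shows "\<exists>n. b < s n"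
proof -
  have lin: "s 0 + real n * c \<le> s n" for n
  proof (induction n)
    case (Suc n)
    then show ?case using step[of n] by (simp add: algebra_simps)
  qed simp
  obtain n where "b - s 0 < real n * c"
    using ex_less_of_nat_mult[OF \<open>0 < c\<close>] by blast
  then show ?thesis using lin[of n] by (intro exI[of _ n]) linarith
qed

lemma funpow_P_eventually_neg:
  assumes "0 \<le> a0"
  shows "\<exists>n. (P ^^ n) a0 < 0"
proof (rule ccontr)
  assume "\<not> ?thesis"
  then have nonneg: "0 \<le> (P ^^ n) a0" for n by (simp add: not_less)
  have le_a0: "(P ^^ n) a0 \<le> a0" for n
  proof (induction n)
    case (Suc n)
    then show ?case using P_le_self[OF nonneg[of n]] by simp
  qed simp
  have "- (P ^^ n) a0 + 1 / (4 * (a0 + 1)) \<le> - (P ^^ Suc n) a0" for n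
    using P_step_ge[OF nonneg le_a0, of n] by simp
  then have "\<exists>n. 0 < - (P ^^ n) a0"
    using assms by (intro unbounded_if_increments_ge) auto
  then obtain n where "0 < - (P ^^ n) a0" ..
  with nonneg[of n] show False by linarith
qed

lemma P_orbit_exits_through_unit_interval:
  assumes "0 \<le> a0"
  shows "\<exists>N. (\<forall>n\<le>N. 0 \<le> (P ^^ n) a0) \<and> (P ^^ N) a0 < 1 \<and>
              -1/4 \<le> (P ^^ Suc N) a0 \<and> (P ^^ Suc N) a0 < 0"
proof -
  define M where "M = (LEAST n. (P ^^ n) a0 < 0)"
  have neg: "(P ^^ M) a0 < 0"
    unfolding M_def using funpow_P_eventually_neg[OF assms] by (rule LeastI_ex)
  have before: "0 \<le> (P ^^ n) a0" if "n < M" for n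
    using not_less_Least[OF that[unfolded M_def]] by (simp add: M_def not_less)
  obtain N where M: "M = Suc N"
    using neg assms by (cases M) auto
  have nonneg: "\<forall>n\<le>N. 0 \<le> (P ^^ n) a0" using before M by auto
  then have "0 \<le> (P ^^ N) a0" by simp
  with neg M have "(P ^^ N) a0 < 1" "-1/4 \<le> (P ^^ Suc N) a0"
    using P_ge_sub_quarter[of "(P ^^ N) a0"] by auto
  with nonneg neg M show ?thesis by blast
qed

lemma P_onto_nonneg:
  assumes "0 \<le> y"
  shows "\<exists>x\<ge>0. P x = y"
proof -
  have "continuous_on {0..y+1} P"
    unfolding P_def by (intro continuous_intros) auto
  moreover have "P 0 \<le> y" "y \<le> P (y + 1)"
    using assms by (simp_all add: P_def field_simps)
  ultimately show ?thesis
    using IVT'[of P 0 y "y + 1"] assms by auto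
qed

definition P_inv :: "real \<Rightarrow> real" where
  "P_inv y = (SOME x. 0 \<le> x \<and> P x = y)"

lemma P_inv: "0 \<le> y \<Longrightarrow> 0 \<le> P_inv y \<and> P (P_inv y) = y"
  unfolding P_inv_def using P_onto_nonneg by (rule someI_ex) auto

lemma funpow_P_backward_orbit:
  assumes "\<And>n. P (q (Suc n)) = q n"
  shows "m \<le> n \<Longrightarrow> (P ^^ m) (q n) = q (n - m)"
proof (induction m)
  case (Suc m)
  then have "n - m = Suc (n - Suc m)" by simp
  with Suc show ?case using assms by simp
qed simp

lemma P_backward_orbit_exceeds:
  assumes "0 \<le> a"
  shows "\<exists>a0 N. b < a0 \<and> (\<forall>n\<le>N. 0 \<le> (P ^^ n) a0) \<and> (P ^^ N) a0 = a"
proof -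
  define q where "q n = (P_inv ^^ n) a" for n
  have q_nonneg: "0 \<le> q n" for n
    by (induction n) (simp_all add: q_def assms P_inv)
  have q_step: "P (q (Suc n)) = q n" for n
    using P_inv[OF q_nonneg[of n]] by (simp add: q_def)
  have "\<exists>n. b < q n"
  proof (rule ccontr)
    assume "\<not> ?thesis"
    then have bounded: "q n \<le> b" for n by (simp add: not_less)
    have "q n + 1 / (4 * (b + 1)) \<le> q (Suc n)" for n
      using P_step_ge[OF q_nonneg bounded, of "Suc n"] q_step[of n] by simp
    moreover have "0 \<le> b" using bounded[of 0] q_nonneg[of 0] by linarith
    ultimately have "\<exists>n. b < q n"
      by (intro unbounded_if_increments_ge[where c = "1 / (4 * (b + 1))"]) auto
    with \<open>\<not> ?thesis\<close> show False ..
  qed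
  then obtain N where "b < q N" by blast
  moreover have "(P ^^ n) (q N) = q (N - n)" if "n \<le> N" for n
    using funpow_P_backward_orbit[of q, OF q_step that] .
  ultimately show ?thesis
    using q_nonneg by (intro exI[of _ "q N"] exI[of _ N]) (auto simp: q_def)
qed

theorem mainTheorem5:
  shows "(\<forall>a0::real. a0 \<ge> 0 \<longrightarrow>
            (\<exists>N0::nat. (\<forall>n\<le>N0. (P ^^ n) a0 \<ge> 0) \<and>
                        (P ^^ N0) a0 < 1 \<and>
                        -1/4 \<le> (P ^^ Suc N0) a0 \<and> (P ^^ Suc N0) a0 < 0))
       \<and> (\<forall>a b::real. 0 \<le> a \<and> a < 1 \<and> b > a \<longrightarrow>
            (\<exists>a0 N0. a0 > b \<and> (\<forall>n\<le>N0. (P ^^ n) a0 \<ge> 0) \<and> (P ^^ N0) a0 = a))"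
  using P_orbit_exits_through_unit_interval P_backward_orbit_exceeds by blast

end
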